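(* Under the Standing Assumptions, let $g:X\to X$ be a homeomorphism commuting with $f$ and let $\Gamma:\mathcal E\to\mathcal E$ be a continuous linear extension of $g$ (fiber isomorphisms $\Gamma_x:\mathcal E_x\to\mathcal E_{gx}$ depending continuously on $x$) commuting with $F$, i.e. $\Gamma_{fx}\circ F_x=F_{gx}\circ\Gamma_x$ for all $x$. Then $\Gamma_x(\mathcal E^i_x)=\mathcal E^i_{gx}$ for all $x\in X$ and $i=1,\dots,\ell$; in particular $\Gamma_x\in\mathcal R_{x,gx}$. (This applies to $\Gamma_x=D_0\mathcal G_x$ for a $C^1$ extension $\mathcal G$ of $g$ preserving the zero section and commuting with $\mathcal F$.)
   Context: Standing Assumptions: $X$ is a compact metric space, $f:X\to X$ a homeomorphism, $\mathcal E$ a continuous finite-dimensional real vector bundle over $X$ with a continuous family of inner-product norms. $F:\mathcal E\to\mathcal E$ is a continuous linear extension of $f$ with fiber isomorphisms $F_x:\mathcal E_x\to\mathcal E_{fx}$; $\chi=(\chi_1,\dots,\chi_\ell)$ with $\chi_1<\dots<\chi_\ell<0$ and $0<\varepsilon<\varepsilon_0(\chi)$; there is a continuous $F$-invariant splitting $\mathcal E=\mathcal E^1\oplus\dots\oplus\mathcal E^\ell$ with $e^{\chi_i-\varepsilon}\|t\|\le\|F_xt\|\le e^{\chi_i+\varepsilon}\|t\|$ for $t\in\mathcal E^i_x$ (after choosing a suitable continuous metric; this holds whenever $F$ has $(\chi,\varepsilon)$-spectrum, i.e. $\{\lambda: e^\lambda\in\mathrm{Sp}(F^*_{\mathbb C})\}\subset\bigcup_i(\chi_i-\varepsilon,\chi_i+\varepsilon)$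 where $F^*v(x)=F(v(f^{-1}x))$ on continuous sections). $\mathcal R_{x,y}$ denotes resonance polynomial maps $\mathcal E_x\to\mathcal E_y$ fixing $0$ with invertible derivative; a linear map is in $\mathcal R_{x,y}$ iff it maps $\mathcal E^i_x$ into $\mathcal E^i_y$ for all $i$. Constants: $d=\lfloor\chi_1/\chi_\ell\rfloor$; $\tilde\lambda=\max\{-\chi_i+\sum_js_j\chi_j<0\}$, $\mu=\max\{\chi_i-\sum_js_j\chi_j<0\}$ (over $i$ and non-negative integers $s_j$ making the expression negative); $\lambda=\max\{\tilde\lambda,-\chi_1+(d+1)\chi_\ell\}$; $\varepsilon_0(\chi)=\min\{-\chi_\ell,-\lambda/(d+2),-\mu/(d+1)\}$. *)

theory Defs
  imports "HOL-Analysis.Analysis"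
begin

text \<open>A continuous vector bundle over X is modelled as a continuous subbundle of the
  trivial bundle X \<times> 'v ('v a Euclidean space): a family of linear subspaces E x
  admitting a continuous family of (linear) projections onto them.\<close>

definition cont_subbundle :: "'x::metric_space set \<Rightarrow> ('x \<Rightarrow> 'v::euclidean_space set) \<Rightarrow> bool" where
  "cont_subbundle X E \<longleftrightarrow> (\<forall>x\<in>X. subspace (E x)) \<and>
     (\<exists>P :: 'x \<Rightarrow> 'v \<Rightarrow>\<^sub>L 'v. continuous_on X P \<and>
        (\<forall>x\<in>X. range (blinfun_apply (P x)) = E x \<and> (\<forall>v. P x (P x v) = P x v)))"

definition total_space :: "'x set \<Rightarrow> ('x \<Rightarrow> 'v set) \<Rightarrow> ('x \<times> 'v) set" where
  "total_space X E = {(x, v). x \<in> X \<and> v \<in> E x}"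

definition fiber_linear :: "'v::real_vector set \<Rightarrow> ('v \<Rightarrow> 'w::real_vector) \<Rightarrow> bool" where
  "fiber_linear V L \<longleftrightarrow> (\<forall>u\<in>V. \<forall>w\<in>V. L (u + w) = L u + L w) \<and> (\<forall>u\<in>V. \<forall>a. L (a *\<^sub>R u) = a *\<^sub>R L u)"

definition lin_ext :: "'x::metric_space set \<Rightarrow> ('x \<Rightarrow> 'v::euclidean_space set) \<Rightarrow> ('x \<Rightarrow> 'x)
     \<Rightarrow> ('x \<Rightarrow> 'v \<Rightarrow> 'v) \<Rightarrow> bool" where
  "lin_ext X E h H \<longleftrightarrow> (\<forall>x\<in>X. fiber_linear (E x) (H x) \<and> bij_betw (H x) (E x) (E (h x))) \<and>
     continuous_on (total_space X E) (\<lambda>(x, v). H x v)"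

definition cont_inner_family :: "'x::metric_space set \<Rightarrow> ('x \<Rightarrow> 'v::euclidean_space set)
     \<Rightarrow> ('x \<Rightarrow> 'v \<Rightarrow> 'v \<Rightarrow> real) \<Rightarrow> bool" where
  "cont_inner_family X E ip \<longleftrightarrow>
     (\<forall>x\<in>X. (\<forall>u\<in>E x. \<forall>w\<in>E x. ip x u w = ip x w u) \<and>
             (\<forall>w\<in>E x. fiber_linear (E x) (\<lambda>u. ip x u w)) \<and>
             (\<forall>u\<in>E x. u \<noteq> 0 \<longrightarrow> ip x u u > 0)) \<and>
     continuous_on {(x, u, w). x \<in> X \<and> u \<in> E x \<and> w \<in> E x} (\<lambda>(x, u, w). ip x u w)"

definition invariant_splitting :: "'x::metric_space set \<Rightarrow> ('x \<Rightarrow> 'v::euclidean_space set) \<Rightarrow> ('x \<Rightarrow> 'x)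
     \<Rightarrow> ('x \<Rightarrow> 'v \<Rightarrow> 'v) \<Rightarrow> nat \<Rightarrow> (nat \<Rightarrow> 'x \<Rightarrow> 'v set) \<Rightarrow> bool" where
  "invariant_splitting X E f F l Es \<longleftrightarrow>
     (\<forall>i\<in>{1..l}. cont_subbundle X (Es i) \<and>
        (\<forall>x\<in>X. Es i x \<subseteq> E x \<and> F x ` Es i x = Es i (f x))) \<and>
     (\<forall>x\<in>X. \<forall>v\<in>E x. \<exists>!u :: nat \<Rightarrow> 'v. (\<forall>i\<in>{1..l}. u i \<in> Es i x) \<and>
         (\<forall>i. i \<notin> {1..l} \<longrightarrow> u i = 0) \<and> v = (\<Sum>i=1..l. u i))"

definition d_const :: "nat \<Rightarrow> (nat \<Rightarrow> real) \<Rightarrow> int" where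
  "d_const l chi = \<lfloor>chi 1 / chi l\<rfloor>"

definition lambda_tilde :: "nat \<Rightarrow> (nat \<Rightarrow> real) \<Rightarrow> real" where
  "lambda_tilde l chi = Sup {t. \<exists>i\<in>{1..l}. \<exists>s :: nat \<Rightarrow> nat.
       t = - chi i + (\<Sum>j=1..l. real (s j) * chi j) \<and> t < 0}"

definition mu_const :: "nat \<Rightarrow> (nat \<Rightarrow> real) \<Rightarrow> real" where
  "mu_const l chi = Sup {t. \<exists>i\<in>{1..l}. \<exists>s :: nat \<Rightarrow> nat.
       t = chi i - (\<Sum>j=1..l. real (s j) * chi j) \<and> t < 0}"

definition lambda_const :: "nat \<Rightarrow> (nat \<Rightarrow> real) \<Rightarrow> real" where
  "lambda_const l chi = max (lambda_tilde l chi) (- chi 1 + (real_of_int (d_const l chi) + 1) * chi l)"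

definition eps0 :: "nat \<Rightarrow> (nat \<Rightarrow> real) \<Rightarrow> real" where
  "eps0 l chi = Min {- chi l, - lambda_const l chi / (real_of_int (d_const l chi) + 2),
                   - mu_const l chi / (real_of_int (d_const l chi) + 1)}"

end

theory Submission
  imports Defs
begin

text \<open>Let \<open>u \<in> Es i x\<close> and split \<open>\<Gamma> x u = (\<Sum>k. w k)\<close> with \<open>w k \<in> Es k (g x)\<close>. Since \<open>\<Gamma>\<close>
  intertwines \<open>F\<close> and is uniformly bounded, \<open>F\<^sup>n (\<Gamma> x u) = \<Gamma> (F\<^sup>n u)\<close> grows at most like
  \<open>exp (n (\<chi> i + \<epsilon>))\<close>. If some \<open>w k\<close> with \<open>\<chi> k - \<epsilon> > \<chi> i + \<epsilon>\<close> were nonzero, the fastest such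
  component would grow like \<open>exp (n (\<chi> k - \<epsilon>))\<close> and dominate all the other terms. The same
  argument for the inverse cocycle \<open>F\<^sup>-\<^sup>n\<close> along \<open>f\<^sup>-\<^sup>1\<close>, in which the rate interval of \<open>Es k\<close>
  becomes \<open>[- \<chi> k - \<epsilon>, - \<chi> k + \<epsilon>]\<close>, rules out the slower components.\<close>

lemma slower_exponentials_not_dominating:
  fixes A \<alpha> B\<^sub>0 \<beta>\<^sub>0 :: real and B \<beta> :: "'a \<Rightarrow> real"
  assumes M: "finite M" and A: "0 < A" and \<beta>\<^sub>0: "\<beta>\<^sub>0 < \<alpha>"
    and \<beta>: "\<And>m. m \<in> M \<Longrightarrow> B m \<noteq> 0 \<Longrightarrow> \<beta> m < \<alpha>"
    and bound: "\<And>n. A * exp (real n * \<alpha>) \<le>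
                    B\<^sub>0 * exp (real n * \<beta>\<^sub>0) + (\<Sum>m\<in>M. B m * exp (real n * \<beta> m))"
  shows False
proof -
  have decay: "(\<lambda>n. b * exp (real n * (\<gamma> - \<alpha>))) \<longlonglongrightarrow> 0" if "b \<noteq> 0 \<Longrightarrow> \<gamma> < \<alpha>" for b \<gamma>
  proof (cases "b = 0")
    case False
    then have "(\<lambda>n. exp (\<gamma> - \<alpha>) ^ n) \<longlonglongrightarrow> 0" using that by (intro LIMSEQ_power_zero) simp
    then show ?thesis by (simp add: exp_of_nat_mult tendsto_mult_right_zero)
  qed simp
  let ?r = "\<lambda>n. B\<^sub>0 * exp (real n * (\<beta>\<^sub>0 - \<alpha>)) + (\<Sum>m\<in>M. B m * exp (real n * (\<beta> m - \<alpha>)))"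
  have "?r \<longlonglongrightarrow> 0"
    using \<beta>\<^sub>0 \<beta> by (intro tendsto_add_zero tendsto_null_sum decay) auto
  moreover have "A \<le> ?r n" for n
  proof -
    have "?r n * exp (real n * \<alpha>) =
          B\<^sub>0 * exp (real n * \<beta>\<^sub>0) + (\<Sum>m\<in>M. B m * exp (real n * \<beta> m))"
      by (simp add: distrib_right sum_distrib_right right_diff_distrib exp_diff)
    then have "A * exp (real n * \<alpha>) \<le> ?r n * exp (real n * \<alpha>)"
      using bound[of n] by argo
    then show ?thesis by (rule mult_right_le_imp_le) simp
  qed
  ultimately have "A \<le> 0" by (intro LIMSEQ_le_const) auto
  with A show False by simp
qed

lemma exp_mult_le_iff:
  fixes a b c :: real
  shows "exp a * b \<le> c \<longleftrightarrow> b \<le> exp (- a) * c"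
  by (simp add: exp_minus field_simps)

lemma le_exp_mult_iff:
  fixes a b c :: real
  shows "b \<le> exp a * c \<longleftrightarrow> exp (- a) * b \<le> c"
  by (simp add: exp_minus field_simps)

lemma additive_on_subspace_sum:
  fixes L :: "'v::real_vector \<Rightarrow> 'w::real_vector"
  assumes V: "subspace V" and add: "\<And>u v. u \<in> V \<Longrightarrow> v \<in> V \<Longrightarrow> L (u + v) = L u + L v"
    and vs: "\<And>j. j \<in> J \<Longrightarrow> v j \<in> V"
  shows "L (\<Sum>j\<in>J. v j) = (\<Sum>j\<in>J. L (v j))"
proof (cases "finite J")
  case True
  then show ?thesis using vs
  proof (induction J rule: finite_induct)
    case empty
    have "L (0 + 0) = L 0 + L 0" using add V subspace_0 by blast
    then show ?case by simp
  next
    case (insert a J)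
    have "(\<Sum>j\<in>J. v j) \<in> V" using insert V by (simp add: subspace_sum)
    then show ?case using insert add by simp
  qed
next
  case False
  have "L (0 + 0) = L 0 + L 0" using add V subspace_0 by blast
  then show ?thesis using False by simp
qed

text \<open>\<open>\<Phi> n x\<close> is an abstract cocycle over \<open>\<phi> n\<close>, so that the locale applies both to \<open>F\<^sup>n\<close> along
  \<open>f\<close> and to \<open>F\<^sup>-\<^sup>n\<close> along \<open>f\<^sup>-\<^sup>1\<close>.\<close>
locale exponential_splitting =
  fixes X :: "'x set" and E :: "'x \<Rightarrow> 'v::real_normed_vector set"
    and I :: "'i set" and Es :: "'i \<Rightarrow> 'x \<Rightarrow> 'v set" and lo hi :: "'i \<Rightarrow> real" and C :: real
    and \<phi> :: "nat \<Rightarrow> 'x \<Rightarrow> 'x" and \<Phi> :: "nat \<Rightarrow> 'x \<Rightarrow> 'v \<Rightarrow> 'v"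
  assumes finite_I: "finite I"
    and E_subspace: "x \<in> X \<Longrightarrow> subspace (E x)"
    and Es_subset: "j \<in> I \<Longrightarrow> x \<in> X \<Longrightarrow> Es j x \<subseteq> E x"
    and \<phi>_X: "x \<in> X \<Longrightarrow> \<phi> n x \<in> X"
    and \<Phi>_E: "x \<in> X \<Longrightarrow> v \<in> E x \<Longrightarrow> \<Phi> n x v \<in> E (\<phi> n x)"
    and \<Phi>_add: "x \<in> X \<Longrightarrow> u \<in> E x \<Longrightarrow> v \<in> E x \<Longrightarrow> \<Phi> n x (u + v) = \<Phi> n x u + \<Phi> n x v"
    and C_pos: "0 < C"
    and \<Phi>_upper: "j \<in> I \<Longrightarrow> x \<in> X \<Longrightarrow> t \<in> Es j x \<Longrightarrow>
                  norm (\<Phi> n x t) \<le> C * exp (real n * hi j) * norm t"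
    and \<Phi>_lower: "j \<in> I \<Longrightarrow> x \<in> X \<Longrightarrow> t \<in> Es j x \<Longrightarrow>
                  exp (real n * lo j) * norm t \<le> C * norm (\<Phi> n x t)"
    and lo_le_hi: "j \<in> I \<Longrightarrow> lo j \<le> hi j"
    and rates_separated: "j \<in> I \<Longrightarrow> k \<in> I \<Longrightarrow> j \<noteq> k \<Longrightarrow> hi j < lo k \<or> hi k < lo j"
begin

lemma \<Phi>_sum:
  "x \<in> X \<Longrightarrow> (\<And>j. j \<in> J \<Longrightarrow> v j \<in> E x) \<Longrightarrow> \<Phi> n x (\<Sum>j\<in>J. v j) = (\<Sum>j\<in>J. \<Phi> n x (v j))"
  by (rule additive_on_subspace_sum[OF E_subspace]) (auto simp: \<Phi>_add)

end

locale bounded_intertwiner = exponential_splitting +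
  fixes g :: "'x \<Rightarrow> 'x" and \<Gamma> :: "'x \<Rightarrow> 'v::real_normed_vector \<Rightarrow> 'v" and K :: real
  assumes g_X: "x \<in> X \<Longrightarrow> g x \<in> X"
    and K_nonneg: "0 \<le> K"
    and \<Gamma>_bounded: "x \<in> X \<Longrightarrow> v \<in> E x \<Longrightarrow> norm (\<Gamma> x v) \<le> K * norm v"
    and \<Gamma>_\<Phi>: "x \<in> X \<Longrightarrow> v \<in> E x \<Longrightarrow> \<Gamma> (\<phi> n x) (\<Phi> n x v) = \<Phi> n (g x) (\<Gamma> x v)"
begin

lemma component_growth_bound:
  assumes x: "x \<in> X" and i: "i \<in> I" and u: "u \<in> Es i x"
    and w: "\<And>j. j \<in> I \<Longrightarrow> w j \<in> Es j (g x)" and sum: "\<Gamma> x u = (\<Sum>j\<in>I. w j)" and k: "k \<in> I"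
  shows "norm (w k) * exp (real n * lo k) \<le> C * C * K * norm u * exp (real n * hi i)
           + (\<Sum>j\<in>I - {k}. C * C * norm (w j) * exp (real n * hi j))"
proof -
  let ?a = "\<lambda>j. \<Phi> n (g x) (w j)" and ?T = "\<Gamma> (\<phi> n x) (\<Phi> n x u)"
  have gx: "g x \<in> X" using g_X x .
  have wE: "w j \<in> E (g x)" if "j \<in> I" for j using w Es_subset gx that by blast
  have uE: "u \<in> E x" using Es_subset i x u by blast
  have "?T = (\<Sum>j\<in>I. ?a j)" using \<Gamma>_\<Phi>[OF x uE] \<Phi>_sum[OF gx, of I w] wE sum by simp
  also have "\<dots> = ?a k + (\<Sum>j\<in>I - {k}. ?a j)" using finite_I k by (rule sum.remove)
  finally have ak: "?a k = ?T - (\<Sum>j\<in>I - {k}. ?a j)" by simp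
  have T: "norm ?T \<le> K * (C * exp (real n * hi i) * norm u)"
    using \<Gamma>_bounded[OF \<phi>_X[OF x] \<Phi>_E[OF x uE]] \<Phi>_upper[OF i x u] K_nonneg
    by (meson mult_left_mono order_trans)
  have "norm (\<Sum>j\<in>I - {k}. ?a j) \<le> (\<Sum>j\<in>I - {k}. norm (?a j))" by (rule norm_sum)
  also have "\<dots> \<le> (\<Sum>j\<in>I - {k}. C * exp (real n * hi j) * norm (w j))"
    using \<Phi>_upper gx w by (intro sum_mono) blast
  finally have rest: "norm (\<Sum>j\<in>I - {k}. ?a j) \<le> (\<Sum>j\<in>I - {k}. C * exp (real n * hi j) * norm (w j))" .
  have "exp (real n * lo k) * norm (w k) \<le> C * norm (?a k)" using \<Phi>_lower[OF k gx w[OF k]] .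
  also have "\<dots> \<le> C * (norm ?T + norm (\<Sum>j\<in>I - {k}. ?a j))"
    using ak C_pos norm_triangle_ineq4 by (metis mult_left_mono less_imp_le)
  also have "\<dots> \<le> C * (K * (C * exp (real n * hi i) * norm u)
                     + (\<Sum>j\<in>I - {k}. C * exp (real n * hi j) * norm (w j)))"
    using T rest C_pos by (intro mult_left_mono add_mono) auto
  finally show ?thesis by (simp add: algebra_simps sum_distrib_left)
qed

text \<open>Among the nonzero components of \<open>\<Gamma> x u\<close> faster than \<open>u\<close>, the one with the largest lower
  rate outgrows \<open>u\<close> and every other component.\<close>
lemma faster_components_vanish:
  assumes x: "x \<in> X" and i: "i \<in> I" and u: "u \<in> Es i x"
    and w: "\<And>j. j \<in> I \<Longrightarrow> w j \<in> Es j (g x)" and sum: "\<Gamma> x u = (\<Sum>j\<in>I. w j)"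
    and k: "k \<in> I" "hi i < lo k"
  shows "w k = 0"
proof (rule ccontr)
  assume "w k \<noteq> 0"
  define S where "S = {j \<in> I. hi i < lo j \<and> w j \<noteq> 0}"
  have S: "finite S" "k \<in> S" using finite_I k \<open>w k \<noteq> 0\<close> by (auto simp: S_def)
  then have "Max (lo ` S) \<in> lo ` S" by (intro Max_in) auto
  then obtain m where m: "m \<in> S" "lo m = Max (lo ` S)" by auto
  have m_max: "lo j \<le> lo m" if "j \<in> S" for j using S(1) that m(2) by simp
  have slower: "hi j < lo m" if j: "j \<in> I" "j \<noteq> m" "w j \<noteq> 0" for j
  proof -
    have "m \<in> I" "hi i < lo m" using m(1) by (auto simp: S_def)
    moreover have "hi i < lo j \<Longrightarrow> lo j \<le> lo m" using m_max j by (simp add: S_def)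
    ultimately show ?thesis using rates_separated[OF j(1) _ j(2)] lo_le_hi[of m] lo_le_hi[OF j(1)]
      by linarith
  qed
  have mI: "m \<in> I" "hi i < lo m" "w m \<noteq> 0" using m(1) by (auto simp: S_def)
  show False
  proof (rule slower_exponentials_not_dominating)
    show "finite (I - {m})" using finite_I by simp
    show "0 < norm (w m)" using mI by simp
    show "hi i < lo m" using mI by simp
    show "hi j < lo m" if "j \<in> I - {m}" "C * C * norm (w j) \<noteq> 0" for j
      using slower that by auto
    show "norm (w m) * exp (real n * lo m) \<le> C * C * K * norm u * exp (real n * hi i)
            + (\<Sum>j\<in>I - {m}. C * C * norm (w j) * exp (real n * hi j))" for n
      by (rule component_growth_bound[OF x i u w sum mI(1)])
  qed
qed

end

primrec cocycle_pow :: "('x \<Rightarrow> 'x) \<Rightarrow> ('x \<Rightarrow> 'v \<Rightarrow> 'v) \<Rightarrow> nat \<Rightarrow> 'x \<Rightarrow> 'v \<Rightarrow> 'v" where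
  "cocycle_pow f F 0 x v = v"
| "cocycle_pow f F (Suc n) x v = F ((f ^^ n) x) (cocycle_pow f F n x v)"

locale commuting_linear_extensions =
  fixes X :: "'x set" and E :: "'x \<Rightarrow> 'v::real_normed_vector set"
    and f f' g :: "'x \<Rightarrow> 'x" and F \<Gamma> :: "'x \<Rightarrow> 'v \<Rightarrow> 'v"
    and I :: "'i set" and Es :: "'i \<Rightarrow> 'x \<Rightarrow> 'v set" and lo hi :: "'i \<Rightarrow> real"
    and N :: "'x \<Rightarrow> 'v \<Rightarrow> real" and C\<^sub>1 C\<^sub>2 K :: real
  assumes f_X: "x \<in> X \<Longrightarrow> f x \<in> X" and f'_X: "x \<in> X \<Longrightarrow> f' x \<in> X"
    and f_f': "x \<in> X \<Longrightarrow> f (f' x) = x" and f'_f: "x \<in> X \<Longrightarrow> f' (f x) = x"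
    and g_X: "x \<in> X \<Longrightarrow> g x \<in> X" and f_g: "x \<in> X \<Longrightarrow> f (g x) = g (f x)"
    and E_subspace: "x \<in> X \<Longrightarrow> subspace (E x)"
    and F_iso: "x \<in> X \<Longrightarrow> fiber_linear (E x) (F x) \<and> bij_betw (F x) (E x) (E (f x))"
    and \<Gamma>_iso: "x \<in> X \<Longrightarrow> fiber_linear (E x) (\<Gamma> x) \<and> bij_betw (\<Gamma> x) (E x) (E (g x))"
    and \<Gamma>_F: "x \<in> X \<Longrightarrow> v \<in> E x \<Longrightarrow> \<Gamma> (f x) (F x v) = F (g x) (\<Gamma> x v)"
    and K_nonneg: "0 \<le> K"
    and \<Gamma>_bounded: "x \<in> X \<Longrightarrow> v \<in> E x \<Longrightarrow> norm (\<Gamma> x v) \<le> K * norm v"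
    and finite_I: "finite I"
    and Es_subspace: "j \<in> I \<Longrightarrow> x \<in> X \<Longrightarrow> subspace (Es j x)"
    and Es_subset: "j \<in> I \<Longrightarrow> x \<in> X \<Longrightarrow> Es j x \<subseteq> E x"
    and F_Es: "j \<in> I \<Longrightarrow> x \<in> X \<Longrightarrow> F x ` Es j x = Es j (f x)"
    and splitting: "x \<in> X \<Longrightarrow> v \<in> E x \<Longrightarrow> \<exists>!u. (\<forall>j\<in>I. u j \<in> Es j x) \<and>
                      (\<forall>j. j \<notin> I \<longrightarrow> u j = 0) \<and> v = (\<Sum>j\<in>I. u j)"
    and C\<^sub>1_pos: "0 < C\<^sub>1" and C\<^sub>2_pos: "0 < C\<^sub>2"
    and norm_le_N: "x \<in> X \<Longrightarrow> v \<in> E x \<Longrightarrow> norm v \<le> C\<^sub>1 * N x v"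
    and N_le_norm: "x \<in> X \<Longrightarrow> v \<in> E x \<Longrightarrow> N x v \<le> C\<^sub>2 * norm v"
    and N_F_lower: "j \<in> I \<Longrightarrow> x \<in> X \<Longrightarrow> t \<in> Es j x \<Longrightarrow> exp (lo j) * N x t \<le> N (f x) (F x t)"
    and N_F_upper: "j \<in> I \<Longrightarrow> x \<in> X \<Longrightarrow> t \<in> Es j x \<Longrightarrow> N (f x) (F x t) \<le> exp (hi j) * N x t"
    and lo_le_hi: "j \<in> I \<Longrightarrow> lo j \<le> hi j"
    and rates_separated: "j \<in> I \<Longrightarrow> k \<in> I \<Longrightarrow> j \<noteq> k \<Longrightarrow> hi j < lo k \<or> hi k < lo j"
begin

abbreviation Fn :: "nat \<Rightarrow> 'x \<Rightarrow> 'v \<Rightarrow> 'v" where "Fn \<equiv> cocycle_pow f F"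

lemma f_pow_X: "x \<in> X \<Longrightarrow> (f ^^ n) x \<in> X"
  by (induction n) (auto simp: f_X)

lemma f'_pow_X: "x \<in> X \<Longrightarrow> (f' ^^ n) x \<in> X"
  by (induction n) (auto simp: f'_X)

lemma f_pow_f'_pow: "x \<in> X \<Longrightarrow> (f ^^ n) ((f' ^^ n) x) = x"
proof (induction n)
  case (Suc n)
  have "(f ^^ Suc n) ((f' ^^ Suc n) x) = (f ^^ n) (f (f' ((f' ^^ n) x)))" by (simp add: funpow_swap1)
  then show ?case using f_f' f'_pow_X Suc by simp
qed simp

lemma f_pow_g: "x \<in> X \<Longrightarrow> (f ^^ n) (g x) = g ((f ^^ n) x)"
  by (induction n) (simp_all add: f_g f_pow_X)

lemma f'_g:
  assumes x: "x \<in> X"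
  shows "f' (g x) = g (f' x)"
proof -
  have "f (g (f' x)) = g x" using f_g[OF f'_X[OF x]] f_f'[OF x] by simp
  then show ?thesis using f'_f[OF g_X[OF f'_X[OF x]]] by simp
qed

lemma f'_pow_g: "x \<in> X \<Longrightarrow> (f' ^^ n) (g x) = g ((f' ^^ n) x)"
  by (induction n) (simp_all add: f'_g f'_pow_X)

lemma F_add:
  assumes "x \<in> X" "u \<in> E x" "v \<in> E x"
  shows "F x (u + v) = F x u + F x v"
  using conjunct1[OF F_iso[OF assms(1)]] assms(2,3) unfolding fiber_linear_def by blast

lemma \<Gamma>_add:
  assumes "x \<in> X" "u \<in> E x" "v \<in> E x"
  shows "\<Gamma> x (u + v) = \<Gamma> x u + \<Gamma> x v"
  using conjunct1[OF \<Gamma>_iso[OF assms(1)]] assms(2,3) unfolding fiber_linear_def by blast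

lemma \<Gamma>_E: "x \<in> X \<Longrightarrow> v \<in> E x \<Longrightarrow> \<Gamma> x v \<in> E (g x)"
  using \<Gamma>_iso by (blast intro: bij_betw_apply)

lemma Fn_bij:
  assumes x: "x \<in> X"
  shows "bij_betw (Fn n x) (E x) (E ((f ^^ n) x))"
proof (induction n)
  case (Suc n)
  have "bij_betw (F ((f ^^ n) x)) (E ((f ^^ n) x)) (E ((f ^^ Suc n) x))"
    using F_iso[OF f_pow_X[OF x]] by simp
  from bij_betw_trans[OF Suc this]
  have "bij_betw (F ((f ^^ n) x) \<circ> Fn n x) (E x) (E ((f ^^ Suc n) x))" .
  moreover have "F ((f ^^ n) x) \<circ> Fn n x = Fn (Suc n) x" by (simp add: fun_eq_iff)
  ultimately show ?case by (simp only:)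
qed (simp add: bij_betw_def inj_on_def)

lemma Fn_E: "x \<in> X \<Longrightarrow> v \<in> E x \<Longrightarrow> Fn n x v \<in> E ((f ^^ n) x)"
  using Fn_bij by (blast intro: bij_betw_apply)

lemma Fn_Es:
  assumes "j \<in> I" "x \<in> X"
  shows "Fn n x ` Es j x = Es j ((f ^^ n) x)"
proof (induction n)
  case (Suc n)
  have "Fn (Suc n) x ` Es j x = F ((f ^^ n) x) ` Fn n x ` Es j x" by (simp add: image_image)
  also have "\<dots> = Es j ((f ^^ Suc n) x)" using Suc F_Es[OF assms(1) f_pow_X[OF assms(2)]] by simp
  finally show ?case .
qed simp

lemma Fn_add:
  assumes "x \<in> X" "u \<in> E x" "v \<in> E x"
  shows "Fn n x (u + v) = Fn n x u + Fn n x v"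
proof (induction n)
  case (Suc n)
  have "Fn (Suc n) x (u + v) = F ((f ^^ n) x) (Fn n x u + Fn n x v)" using Suc by simp
  also have "\<dots> = Fn (Suc n) x u + Fn (Suc n) x v"
    using F_add[OF f_pow_X[OF assms(1)] Fn_E[OF assms(1,2)] Fn_E[OF assms(1,3)]] by simp
  finally show ?case .
qed simp

lemma \<Gamma>_Fn:
  assumes x: "x \<in> X" and v: "v \<in> E x"
  shows "\<Gamma> ((f ^^ n) x) (Fn n x v) = Fn n (g x) (\<Gamma> x v)"
proof (induction n)
  case (Suc n)
  have "\<Gamma> ((f ^^ Suc n) x) (Fn (Suc n) x v) = F (g ((f ^^ n) x)) (\<Gamma> ((f ^^ n) x) (Fn n x v))"
    using \<Gamma>_F[OF f_pow_X[OF x] Fn_E[OF x v]] by simp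
  then show ?case using Suc f_pow_g[OF x] by simp
qed simp

lemma N_Fn_upper:
  assumes "j \<in> I" "x \<in> X" "t \<in> Es j x"
  shows "N ((f ^^ n) x) (Fn n x t) \<le> exp (real n * hi j) * N x t"
proof (induction n)
  case (Suc n)
  have "Fn n x t \<in> Es j ((f ^^ n) x)" using Fn_Es assms by blast
  then have "N ((f ^^ Suc n) x) (Fn (Suc n) x t) \<le> exp (hi j) * N ((f ^^ n) x) (Fn n x t)"
    using N_F_upper assms f_pow_X by simp
  also have "\<dots> \<le> exp (hi j) * (exp (real n * hi j) * N x t)" using Suc by simp
  finally show ?case by (simp add: distrib_right exp_add)
qed simp

lemma N_Fn_lower:
  assumes "j \<in> I" "x \<in> X" "t \<in> Es j x"
  shows "exp (real n * lo j) * N x t \<le> N ((f ^^ n) x) (Fn n x t)"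
proof (induction n)
  case (Suc n)
  have "exp (real (Suc n) * lo j) * N x t = exp (lo j) * (exp (real n * lo j) * N x t)"
    by (simp add: distrib_right exp_add)
  also have "\<dots> \<le> exp (lo j) * N ((f ^^ n) x) (Fn n x t)" using Suc by simp
  also have "\<dots> \<le> N ((f ^^ Suc n) x) (Fn (Suc n) x t)"
    using N_F_lower assms f_pow_X Fn_Es by simp blast
  finally show ?case .
qed simp

lemma Fn_norm_upper:
  assumes "j \<in> I" "x \<in> X" "t \<in> Es j x"
  shows "norm (Fn n x t) \<le> C\<^sub>1 * C\<^sub>2 * exp (real n * hi j) * norm t"
proof -
  have t: "t \<in> E x" and Fnt: "Fn n x t \<in> E ((f ^^ n) x)" using assms Es_subset Fn_E by blast+
  have "norm (Fn n x t) \<le> C\<^sub>1 * N ((f ^^ n) x) (Fn n x t)" using norm_le_N f_pow_X assms Fnt by blast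
  also have "\<dots> \<le> C\<^sub>1 * (exp (real n * hi j) * (C\<^sub>2 * norm t))"
    using N_Fn_upper[OF assms] N_le_norm[OF assms(2) t] C\<^sub>1_pos
    by (meson exp_ge_zero mult_left_mono order.trans less_imp_le)
  finally show ?thesis by (simp add: algebra_simps)
qed

lemma Fn_norm_lower:
  assumes "j \<in> I" "x \<in> X" "t \<in> Es j x"
  shows "exp (real n * lo j) * norm t \<le> C\<^sub>1 * C\<^sub>2 * norm (Fn n x t)"
proof -
  have t: "t \<in> E x" and Fnt: "Fn n x t \<in> E ((f ^^ n) x)" using assms Es_subset Fn_E by blast+
  have "exp (real n * lo j) * norm t \<le> exp (real n * lo j) * (C\<^sub>1 * N x t)"
    using norm_le_N[OF assms(2) t] by simp
  also have "\<dots> \<le> C\<^sub>1 * N ((f ^^ n) x) (Fn n x t)"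
    using N_Fn_lower[OF assms] C\<^sub>1_pos by (simp add: algebra_simps)
  also have "\<dots> \<le> C\<^sub>1 * (C\<^sub>2 * norm (Fn n x t))"
    using N_le_norm f_pow_X assms Fnt C\<^sub>1_pos by simp
  finally show ?thesis by (simp add: algebra_simps)
qed

sublocale forward: bounded_intertwiner X E I Es lo hi "C\<^sub>1 * C\<^sub>2" "\<lambda>n. f ^^ n" Fn g \<Gamma> K
  by (unfold_locales; fact finite_I E_subspace Es_subset f_pow_X Fn_E Fn_add
      mult_pos_pos[OF C\<^sub>1_pos C\<^sub>2_pos] Fn_norm_upper Fn_norm_lower lo_le_hi rates_separated
      g_X K_nonneg \<Gamma>_bounded \<Gamma>_Fn)

definition Fback :: "nat \<Rightarrow> 'x \<Rightarrow> 'v \<Rightarrow> 'v" where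
  "Fback n x = inv_into (E ((f' ^^ n) x)) (Fn n ((f' ^^ n) x))"

lemma Fn_bij_back:
  assumes "x \<in> X"
  shows "bij_betw (Fn n ((f' ^^ n) x)) (E ((f' ^^ n) x)) (E x)"
  using Fn_bij[OF f'_pow_X[OF assms, of n], of n] f_pow_f'_pow[OF assms] by simp

lemma Fback_E:
  assumes "x \<in> X" "v \<in> E x"
  shows "Fback n x v \<in> E ((f' ^^ n) x)"
  unfolding Fback_def by (rule bij_betw_apply[OF bij_betw_inv_into[OF Fn_bij_back[OF assms(1)]] assms(2)])

lemma Fn_Fback:
  assumes "x \<in> X" "v \<in> E x"
  shows "Fn n ((f' ^^ n) x) (Fback n x v) = v"
  unfolding Fback_def
  by (rule f_inv_into_f) (simp add: bij_betw_imp_surj_on[OF Fn_bij_back[OF assms(1)]] assms(2))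

lemma Fback_eqI:
  assumes "x \<in> X" "z \<in> E ((f' ^^ n) x)" "Fn n ((f' ^^ n) x) z = v"
  shows "Fback n x v = z"
  unfolding Fback_def by (rule inv_into_f_eq[OF bij_betw_imp_inj_on[OF Fn_bij_back[OF assms(1)]] assms(2,3)])

lemma Fback_add:
  assumes x: "x \<in> X" and u: "u \<in> E x" and v: "v \<in> E x"
  shows "Fback n x (u + v) = Fback n x u + Fback n x v"
proof (rule Fback_eqI[OF x])
  show "Fback n x u + Fback n x v \<in> E ((f' ^^ n) x)"
    by (rule subspace_add[OF E_subspace[OF f'_pow_X[OF x]] Fback_E[OF x u] Fback_E[OF x v]])
  show "Fn n ((f' ^^ n) x) (Fback n x u + Fback n x v) = u + v"
    unfolding Fn_add[OF f'_pow_X[OF x] Fback_E[OF x u] Fback_E[OF x v]] Fn_Fback[OF x u] Fn_Fback[OF x v] ..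
qed

lemma Fback_Es:
  assumes j: "j \<in> I" and x: "x \<in> X" and t: "t \<in> Es j x"
  obtains "Fback n x t \<in> Es j ((f' ^^ n) x)" and "Fn n ((f' ^^ n) x) (Fback n x t) = t"
proof -
  have "t \<in> Fn n ((f' ^^ n) x) ` Es j ((f' ^^ n) x)"
    using Fn_Es[OF j f'_pow_X[OF x], of n] f_pow_f'_pow[OF x] t by simp
  then obtain z where z: "z \<in> Es j ((f' ^^ n) x)" and t_eq: "Fn n ((f' ^^ n) x) z = t" by blast
  have "Fback n x t = z" using Fback_eqI[OF x _ t_eq] Es_subset[OF j f'_pow_X[OF x]] z by blast
  then show ?thesis using that z t_eq by simp
qed

lemma Fback_norm_upper:
  assumes j: "j \<in> I" and x: "x \<in> X" and t: "t \<in> Es j x"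
  shows "norm (Fback n x t) \<le> C\<^sub>1 * C\<^sub>2 * exp (real n * - lo j) * norm t"
proof -
  obtain z: "Fback n x t \<in> Es j ((f' ^^ n) x)" and t_eq: "Fn n ((f' ^^ n) x) (Fback n x t) = t"
    using Fback_Es[OF j x t, of n] .
  have "exp (real n * lo j) * norm (Fback n x t) \<le> C\<^sub>1 * C\<^sub>2 * norm t"
    using Fn_norm_lower[OF j f'_pow_X[OF x] z, of n] by (simp only: t_eq)
  then show ?thesis by (simp add: exp_mult_le_iff mult.assoc mult.left_commute)
qed

lemma Fback_norm_lower:
  assumes j: "j \<in> I" and x: "x \<in> X" and t: "t \<in> Es j x"
  shows "exp (real n * - hi j) * norm t \<le> C\<^sub>1 * C\<^sub>2 * norm (Fback n x t)"
proof -
  obtain z: "Fback n x t \<in> Es j ((f' ^^ n) x)" and t_eq: "Fn n ((f' ^^ n) x) (Fback n x t) = t"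
    using Fback_Es[OF j x t, of n] .
  have "norm t \<le> exp (real n * hi j) * (C\<^sub>1 * C\<^sub>2 * norm (Fback n x t))"
    using Fn_norm_upper[OF j f'_pow_X[OF x] z, of n] by (simp only: t_eq mult_ac)
  then show ?thesis by (simp add: le_exp_mult_iff)
qed

lemma \<Gamma>_Fback:
  assumes x: "x \<in> X" and v: "v \<in> E x"
  shows "\<Gamma> ((f' ^^ n) x) (Fback n x v) = Fback n (g x) (\<Gamma> x v)"
proof (rule Fback_eqI[symmetric, OF g_X[OF x]])
  let ?y = "(f' ^^ n) x"
  have y: "?y \<in> X" and z: "Fback n x v \<in> E ?y" using f'_pow_X[OF x] Fback_E[OF x v] .
  show "\<Gamma> ?y (Fback n x v) \<in> E ((f' ^^ n) (g x))" using \<Gamma>_E[OF y z] f'_pow_g[OF x] by simp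
  have "Fn n (g ?y) (\<Gamma> ?y (Fback n x v)) = \<Gamma> ((f ^^ n) ?y) (Fn n ?y (Fback n x v))"
    using \<Gamma>_Fn[OF y z] by simp
  then show "Fn n ((f' ^^ n) (g x)) (\<Gamma> ?y (Fback n x v)) = \<Gamma> x v"
    using Fn_Fback[OF x v] f_pow_f'_pow[OF x] f'_pow_g[OF x] by simp
qed

sublocale backward: bounded_intertwiner X E I Es "\<lambda>j. - hi j" "\<lambda>j. - lo j" "C\<^sub>1 * C\<^sub>2"
    "\<lambda>n. f' ^^ n" Fback g \<Gamma> K
proof (unfold_locales; (fact finite_I E_subspace Es_subset f'_pow_X Fback_E Fback_add
      mult_pos_pos[OF C\<^sub>1_pos C\<^sub>2_pos] Fback_norm_upper Fback_norm_lower
      g_X K_nonneg \<Gamma>_bounded \<Gamma>_Fback)?)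
  show "- hi j \<le> - lo j" if "j \<in> I" for j
    using lo_le_hi[OF that] by simp
  show "- lo j < - hi k \<or> - lo k < - hi j" if "j \<in> I" "k \<in> I" "j \<noteq> k" for j k
    using rates_separated[OF that(2,1)] that(3) by auto
qed

lemma splitting_unique:
  assumes x: "x \<in> X" and a: "\<And>j. j \<in> I \<Longrightarrow> a j \<in> Es j x" and b: "\<And>j. j \<in> I \<Longrightarrow> b j \<in> Es j x"
    and eq: "(\<Sum>j\<in>I. a j) = (\<Sum>j\<in>I. b j)" and j: "j \<in> I"
  shows "a j = b j"
proof -
  define P where "P u \<longleftrightarrow> (\<forall>j\<in>I. u j \<in> Es j x) \<and> (\<forall>j. j \<notin> I \<longrightarrow> u j = 0) \<and>
                              (\<Sum>j\<in>I. a j) = (\<Sum>j\<in>I. u j)" for u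
  have "(\<Sum>j\<in>I. a j) \<in> E x"
    by (rule subspace_sum[OF E_subspace[OF x]]) (use a Es_subset[OF _ x] in blast)
  then obtain u where "\<And>u'. P u' \<Longrightarrow> u' = u"
    using splitting[OF x] unfolding P_def by (metis (no_types, lifting))
  moreover have "P (\<lambda>j. if j \<in> I then a j else 0)" "P (\<lambda>j. if j \<in> I then b j else 0)"
    using a b eq by (simp_all add: P_def)
  ultimately have "(\<lambda>j. if j \<in> I then a j else 0) = (\<lambda>j. if j \<in> I then b j else 0)" by metis
  then show ?thesis using j by (metis (mono_tags))
qed

lemma \<Gamma>_mem_Es:
  assumes x: "x \<in> X" and i: "i \<in> I" and u: "u \<in> Es i x"
  shows "\<Gamma> x u \<in> Es i (g x)"
proof -
  have gx: "g x \<in> X" using g_X[OF x] .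
  have uE: "u \<in> E x" using Es_subset[OF i x] u ..
  obtain w where w: "\<And>j. j \<in> I \<Longrightarrow> w j \<in> Es j (g x)" and sum: "\<Gamma> x u = (\<Sum>j\<in>I. w j)"
    using ex1_implies_ex[OF splitting[OF gx \<Gamma>_E[OF x uE]]] by blast
  have "w k = 0" if k: "k \<in> I" "k \<noteq> i" for k
  proof -
    have "hi i < lo k \<or> - lo i < - hi k" using rates_separated[OF i k(1)] k(2) by auto
    then show ?thesis
      using forward.faster_components_vanish[OF x i u w sum k(1)]
        backward.faster_components_vanish[OF x i u w sum k(1)] by blast
  qed
  then have "(\<Sum>j\<in>I - {i}. w j) = 0" by (intro sum.neutral) blast
  then have "\<Gamma> x u = w i" using sum sum.remove[OF finite_I i, of w] by simp
  then show ?thesis using w[OF i] by simp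
qed

lemma \<Gamma>_image_Es:
  assumes x: "x \<in> X" and i: "i \<in> I"
  shows "\<Gamma> x ` Es i x = Es i (g x)"
proof
  show "\<Gamma> x ` Es i x \<subseteq> Es i (g x)" using \<Gamma>_mem_Es[OF x i] by blast
  show "Es i (g x) \<subseteq> \<Gamma> x ` Es i x"
  proof
    fix w assume w: "w \<in> Es i (g x)"
    have gx: "g x \<in> X" using g_X[OF x] .
    have "w \<in> \<Gamma> x ` E x"
      using bij_betw_imp_surj_on[OF conjunct2[OF \<Gamma>_iso[OF x]]] Es_subset[OF i gx] w by blast
    then obtain v where v: "v \<in> E x" "\<Gamma> x v = w" by blast
    obtain u where u: "\<And>j. j \<in> I \<Longrightarrow> u j \<in> Es j x" and v_sum: "v = (\<Sum>j\<in>I. u j)"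
      using ex1_implies_ex[OF splitting[OF x v(1)]] by blast
    define w' where "w' j = (if j = i then w else 0)" for j
    have w': "w' j \<in> Es j (g x)" if "j \<in> I" for j
      using w subspace_0[OF Es_subspace[OF that gx]] by (simp add: w'_def)
    have "(\<Sum>j\<in>I. \<Gamma> x (u j)) = \<Gamma> x v"
      unfolding v_sum using u Es_subset[OF _ x]
      by (intro additive_on_subspace_sum[OF E_subspace[OF x] \<Gamma>_add[OF x], symmetric]) blast+
    also have "\<dots> = (\<Sum>j\<in>I. w' j)" using v(2) finite_I i by (simp add: w'_def)
    finally have sum_eq: "(\<Sum>j\<in>I. \<Gamma> x (u j)) = (\<Sum>j\<in>I. w' j)" .
    have \<Gamma>u: "\<Gamma> x (u j) \<in> Es j (g x)" if "j \<in> I" for j using \<Gamma>_mem_Es[OF x that u[OF that]] .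
    have "\<Gamma> x (u i) = w' i" by (rule splitting_unique[OF gx \<Gamma>u w' sum_eq i])
    then have "\<Gamma> x (u i) = w" by (simp add: w'_def)
    then show "w \<in> \<Gamma> x ` Es i x" using u[OF i] by blast
  qed
qed

end

lemma homogeneous_le_of_unit_sphere:
  fixes \<phi> \<psi> :: "'v::real_normed_vector \<Rightarrow> real"
  assumes V: "subspace V"
    and \<phi>: "\<And>r v. 0 \<le> r \<Longrightarrow> v \<in> V \<Longrightarrow> \<phi> (r *\<^sub>R v) = r * \<phi> v"
    and \<psi>: "\<And>r v. 0 \<le> r \<Longrightarrow> v \<in> V \<Longrightarrow> \<psi> (r *\<^sub>R v) = r * \<psi> v"
    and unit: "\<And>v. v \<in> V \<Longrightarrow> norm v = 1 \<Longrightarrow> \<phi> v \<le> \<psi> v"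
    and v: "v \<in> V"
  shows "\<phi> v \<le> \<psi> v"
proof (cases "v = 0")
  case True
  then show ?thesis using \<phi>[of 0 v] \<psi>[of 0 v] v by simp
next
  case False
  define e where "e = (1 / norm v) *\<^sub>R v"
  have e: "e \<in> V" "norm e = 1" using V v False by (auto simp: e_def subspace_scale)
  have "v = norm v *\<^sub>R e" using False by (simp add: e_def)
  then have "\<phi> v = norm v * \<phi> e" "\<psi> v = norm v * \<psi> e" using \<phi> \<psi> e(1) by (metis norm_ge_zero)+
  then show ?thesis using unit[OF e] by (simp add: mult_left_mono)
qed

lemma unit_sphere_bundle_compact:
  fixes X :: "'x::metric_space set" and E :: "'x \<Rightarrow> 'v::euclidean_space set"
  assumes X: "compact X" and E: "cont_subbundle X E"
  shows "compact {(x, v). x \<in> X \<and> v \<in> E x \<and> norm v = 1}"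
proof -
  obtain P :: "'x \<Rightarrow> 'v \<Rightarrow>\<^sub>L 'v" where P: "continuous_on X P"
    "\<And>x. x \<in> X \<Longrightarrow> range (blinfun_apply (P x)) = E x \<and> (\<forall>v. P x (P x v) = P x v)"
    using E unfolding cont_subbundle_def by blast
  have fixed: "v \<in> E x \<longleftrightarrow> P x v = v" if x: "x \<in> X" for x v
  proof
    assume "v \<in> E x"
    then obtain w where "v = P x w" using P(2)[OF x] by blast
    then show "P x v = v" using P(2)[OF x] by simp
  next
    assume "P x v = v"
    then have "v \<in> range (blinfun_apply (P x))" by (metis rangeI)
    then show "v \<in> E x" using P(2)[OF x] by simp
  qed
  let ?S = "X \<times> sphere (0::'v) 1"
  have S: "compact ?S" using X by (simp add: compact_Times)
  have "continuous_on ?S (\<lambda>p. P (fst p) (snd p) - snd p)"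
    by (intro continuous_intros continuous_on_compose2[OF P(1)]) auto
  then have "closed {p \<in> ?S. P (fst p) (snd p) - snd p = 0}"
    by (rule continuous_closed_preimage_constant[OF _ compact_imp_closed[OF S]])
  moreover have "{(x, v). x \<in> X \<and> v \<in> E x \<and> norm v = 1} = ?S \<inter> {p \<in> ?S. P (fst p) (snd p) - snd p = 0}"
    using fixed by auto
  ultimately show ?thesis using compact_Int_closed[OF S] by simp
qed

lemma inner_family_scale:
  assumes ip: "cont_inner_family X E ip" and x: "x \<in> X" and E: "subspace (E x)" and e: "e \<in> E x"
  shows "ip x (r *\<^sub>R e) (r *\<^sub>R e) = r * r * ip x e e"
proof -
  have re: "r *\<^sub>R e \<in> E x" using E e by (simp add: subspace_scale)
  have lin: "\<And>w. w \<in> E x \<Longrightarrow> fiber_linear (E x) (\<lambda>u. ip x u w)"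
    and sym: "\<And>u w. u \<in> E x \<Longrightarrow> w \<in> E x \<Longrightarrow> ip x u w = ip x w u"
    using ip x unfolding cont_inner_family_def by auto
  have "ip x (r *\<^sub>R e) (r *\<^sub>R e) = r * ip x e (r *\<^sub>R e)"
    using lin[OF re] e unfolding fiber_linear_def by auto
  also have "ip x e (r *\<^sub>R e) = r * ip x e e"
    using sym[OF e re] lin[OF e] e unfolding fiber_linear_def by auto
  finally show ?thesis by simp
qed

lemma compact_pos_lower_bound:
  fixes h :: "'a::topological_space \<Rightarrow> real"
  assumes S: "compact S" and h: "continuous_on S h" and pos: "\<And>p. p \<in> S \<Longrightarrow> 0 < h p"
  obtains m where "0 < m" "\<And>p. p \<in> S \<Longrightarrow> m \<le> h p"
proof (cases "S = {}")
  case False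
  then obtain p\<^sub>0 where "p\<^sub>0 \<in> S" "\<And>p. p \<in> S \<Longrightarrow> h p\<^sub>0 \<le> h p"
    using continuous_attains_inf[OF S _ h] by blast
  then show ?thesis using that pos by blast
qed (use that[of 1] in simp)

lemma inner_family_norm_equiv:
  fixes X :: "'x::metric_space set" and E :: "'x \<Rightarrow> 'v::euclidean_space set"
  assumes X: "compact X" and E: "cont_subbundle X E" and ip: "cont_inner_family X E ip"
  obtains C\<^sub>1 C\<^sub>2 where "0 < C\<^sub>1" "0 < C\<^sub>2"
    "\<And>x v. x \<in> X \<Longrightarrow> v \<in> E x \<Longrightarrow> norm v \<le> C\<^sub>1 * sqrt (ip x v v)"
    "\<And>x v. x \<in> X \<Longrightarrow> v \<in> E x \<Longrightarrow> sqrt (ip x v v) \<le> C\<^sub>2 * norm v"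
proof -
  let ?U = "{(x, v). x \<in> X \<and> v \<in> E x \<and> norm v = 1}" and ?h = "\<lambda>p. sqrt (ip (fst p) (snd p) (snd p))"
  have U: "compact ?U" by (rule unit_sphere_bundle_compact[OF X E])
  have sub: "subspace (E x)" if "x \<in> X" for x using E that unfolding cont_subbundle_def by blast
  have "continuous_on {(x, u, w). x \<in> X \<and> u \<in> E x \<and> w \<in> E x} (\<lambda>(x, u, w). ip x u w)"
    using ip unfolding cont_inner_family_def by blast
  then have "continuous_on ?U (\<lambda>p. (\<lambda>(x, u, w). ip x u w) (fst p, snd p, snd p))"
    by (rule continuous_on_compose2) (auto intro!: continuous_intros)
  then have h: "continuous_on ?U ?h" by (intro continuous_intros) simp
  have "0 < ?h p" if p: "p \<in> ?U" for p
  proof -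
    obtain x v where xv: "p = (x, v)" "x \<in> X" "v \<in> E x" "norm v = 1" using p by auto
    then have "v \<noteq> 0" by auto
    then show ?thesis using ip xv unfolding cont_inner_family_def by auto
  qed
  then obtain m where m: "0 < m" "\<And>p. p \<in> ?U \<Longrightarrow> m \<le> ?h p"
    using compact_pos_lower_bound[OF U h] by blast
  obtain M where M: "0 < M" "\<And>p. p \<in> ?U \<Longrightarrow> ?h p \<le> M"
    using compact_imp_bounded[OF compact_continuous_image[OF h U]] unfolding bounded_pos by force
  have scale: "sqrt (ip x (r *\<^sub>R v) (r *\<^sub>R v)) = r * sqrt (ip x v v)" if "x \<in> X" "v \<in> E x" "0 \<le> r" for x v r
    using inner_family_scale[OF ip that(1) sub[OF that(1)] that(2)] that(3) by (simp add: real_sqrt_mult)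
  show ?thesis
  proof (rule that[of "1 / m" M])
    fix x v assume x: "x \<in> X" and v: "v \<in> E x"
    have "m * norm v \<le> sqrt (ip x v v)"
      by (rule homogeneous_le_of_unit_sphere[OF sub[OF x] _ _ _ v]) (use m x scale in auto)
    then show "norm v \<le> 1 / m * sqrt (ip x v v)" using m(1) by (simp add: field_simps)
    show "sqrt (ip x v v) \<le> M * norm v"
      by (rule homogeneous_le_of_unit_sphere[OF sub[OF x] _ _ _ v]) (use M x scale in auto)
  qed (use m M in auto)
qed

lemma lin_ext_bounded:
  fixes X :: "'x::metric_space set" and E :: "'x \<Rightarrow> 'v::euclidean_space set"
  assumes X: "compact X" and E: "cont_subbundle X E" and H: "lin_ext X E h H"
  obtains K where "0 \<le> K" "\<And>x v. x \<in> X \<Longrightarrow> v \<in> E x \<Longrightarrow> norm (H x v) \<le> K * norm v"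
proof -
  let ?U = "{(x, v). x \<in> X \<and> v \<in> E x \<and> norm v = 1}" and ?h = "\<lambda>p. norm (H (fst p) (snd p))"
  have sub: "subspace (E x)" if "x \<in> X" for x using E that unfolding cont_subbundle_def by blast
  have "continuous_on (total_space X E) (\<lambda>(x, v). H x v)" using H unfolding lin_ext_def by blast
  then have "continuous_on ?U (\<lambda>(x, v). H x v)"
    by (rule continuous_on_subset) (auto simp: total_space_def)
  then have h: "continuous_on ?U ?h" by (intro continuous_intros) (simp add: case_prod_beta')
  obtain K where K: "0 < K" "\<And>p. p \<in> ?U \<Longrightarrow> ?h p \<le> K"
    using compact_imp_bounded[OF compact_continuous_image[OF h unit_sphere_bundle_compact[OF X E]]]
    unfolding bounded_pos by force
  have scale: "norm (H x (r *\<^sub>R v)) = r * norm (H x v)" if "x \<in> X" "v \<in> E x" "0 \<le> r" for x v r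
    using H that unfolding lin_ext_def fiber_linear_def by auto
  show ?thesis
  proof (rule that[of K])
    fix x v assume x: "x \<in> X" and v: "v \<in> E x"
    show "norm (H x v) \<le> K * norm v"
      by (rule homogeneous_le_of_unit_sphere[OF sub[OF x] _ _ _ v]) (use K x scale in auto)
  qed (use K in simp)
qed

lemma eps0_separates_exponents:
  fixes chi :: "nat \<Rightarrow> real"
  assumes chi_incr: "\<forall>i j. 1 \<le> i \<and> i < j \<and> j \<le> l \<longrightarrow> chi i < chi j"
    and chi_neg: "chi l < 0" and eps_small: "\<epsilon> < eps0 l chi"
    and jk: "1 \<le> j" "j < k" "k \<le> l"
  shows "chi j + \<epsilon> < chi k - \<epsilon>"
proof -
  define M where "M = {t. \<exists>i\<in>{1..l}. \<exists>s :: nat \<Rightarrow> nat.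
                         t = chi i - (\<Sum>j=1..l. real (s j) * chi j) \<and> t < 0}"
  have "(\<Sum>m=1..l. real (if m = k then 1 else 0) * chi m) = (\<Sum>m=1..l. if m = k then chi m else 0)"
    by (rule sum.cong) auto
  also have "\<dots> = chi k" using jk by (simp add: sum.delta)
  finally have "(\<Sum>m=1..l. real (if m = k then 1 else 0) * chi m) = chi k" .
  then have jk_in_M: "chi j - chi k \<in> M"
    unfolding M_def using chi_incr jk
    by (intro CollectI bexI[of _ j] exI[of _ "\<lambda>m. if m = k then 1 else 0"]) auto
  have "bdd_above M" unfolding M_def bdd_above_def by (intro exI[of _ 0]) auto
  then have mu_ge: "chi j - chi k \<le> mu_const l chi"
    unfolding mu_const_def M_def[symmetric] using jk_in_M by (rule cSup_upper[rotated])
  have "M \<noteq> {}" using jk_in_M by blast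
  then have mu_le: "mu_const l chi \<le> 0"
    unfolding mu_const_def M_def[symmetric] by (rule cSup_least) (simp add: M_def)
  have "chi 1 < chi l" using chi_incr jk by auto
  then have "1 \<le> d_const l chi" using chi_neg by (simp add: d_const_def le_divide_eq)
  then have "- mu_const l chi / (real_of_int (d_const l chi) + 1) \<le> - mu_const l chi / 2"
    using mu_le by (intro divide_left_mono) auto
  moreover have "eps0 l chi \<le> - mu_const l chi / (real_of_int (d_const l chi) + 1)"
    unfolding eps0_def by simp
  ultimately show ?thesis using eps_small mu_ge by linarith
qed

lemma commuting_linear_extensionsI:
  fixes X :: "'x::metric_space set" and E :: "'x \<Rightarrow> 'v::euclidean_space set"
  assumes f: "homeomorphism X X f f'" and g: "\<exists>g'. homeomorphism X X g g'"
    and fg: "\<forall>x\<in>X. f (g x) = g (f x)"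
    and E: "cont_subbundle X E" and F: "lin_ext X E f F" and \<Gamma>: "lin_ext X E g \<Gamma>"
    and \<Gamma>F: "\<forall>x\<in>X. \<forall>v\<in>E x. \<Gamma> (f x) (F x v) = F (g x) (\<Gamma> x v)"
    and K: "0 \<le> K" "\<And>x v. x \<in> X \<Longrightarrow> v \<in> E x \<Longrightarrow> norm (\<Gamma> x v) \<le> K * norm v"
    and splitting: "invariant_splitting X E f F l Es"
    and N: "0 < C\<^sub>1" "0 < C\<^sub>2" "\<And>x v. x \<in> X \<Longrightarrow> v \<in> E x \<Longrightarrow> norm v \<le> C\<^sub>1 * N x v"
      "\<And>x v. x \<in> X \<Longrightarrow> v \<in> E x \<Longrightarrow> N x v \<le> C\<^sub>2 * norm v"
    and rates: "\<forall>i\<in>{1..l}. \<forall>x\<in>X. \<forall>t\<in>Es i x.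
                  exp (lo i) * N x t \<le> N (f x) (F x t) \<and> N (f x) (F x t) \<le> exp (hi i) * N x t"
    and lo_le_hi: "\<And>i. i \<in> {1..l} \<Longrightarrow> lo i \<le> hi i"
    and separated: "\<And>i j. i \<in> {1..l} \<Longrightarrow> j \<in> {1..l} \<Longrightarrow> i \<noteq> j \<Longrightarrow> hi i < lo j \<or> hi j < lo i"
  shows "commuting_linear_extensions X E f f' g F \<Gamma> {1..l} Es lo hi N C\<^sub>1 C\<^sub>2 K"
proof -
  have f_facts: "f x \<in> X" "f' x \<in> X" "f (f' x) = x" "f' (f x) = x" if "x \<in> X" for x
    using f that unfolding homeomorphism_def by auto
  have g_X: "g x \<in> X" if "x \<in> X" for x using g that unfolding homeomorphism_def by auto
  have fg': "f (g x) = g (f x)" and \<Gamma>F': "v \<in> E x \<Longrightarrow> \<Gamma> (f x) (F x v) = F (g x) (\<Gamma> x v)"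
    if "x \<in> X" for x v using fg \<Gamma>F that by auto
  have E_subspace: "subspace (E x)" if "x \<in> X" for x using E that unfolding cont_subbundle_def by blast
  have F_iso: "fiber_linear (E x) (F x) \<and> bij_betw (F x) (E x) (E (f x))"
    and \<Gamma>_iso: "fiber_linear (E x) (\<Gamma> x) \<and> bij_betw (\<Gamma> x) (E x) (E (g x))"
    if "x \<in> X" for x using F \<Gamma> that unfolding lin_ext_def by auto
  have Es_subspace: "subspace (Es j x)" and Es_subset: "Es j x \<subseteq> E x"
    and F_Es: "F x ` Es j x = Es j (f x)" if "j \<in> {1..l}" "x \<in> X" for j x
    using splitting that unfolding invariant_splitting_def cont_subbundle_def by auto
  have unique: "\<exists>!u. (\<forall>j\<in>{1..l}. u j \<in> Es j x) \<and> (\<forall>j. j \<notin> {1..l} \<longrightarrow> u j = 0) \<and>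
                     v = (\<Sum>j\<in>{1..l}. u j)" if "x \<in> X" "v \<in> E x" for x v
    using splitting that unfolding invariant_splitting_def by blast
  have N_F: "exp (lo j) * N x t \<le> N (f x) (F x t)" "N (f x) (F x t) \<le> exp (hi j) * N x t"
    if "j \<in> {1..l}" "x \<in> X" "t \<in> Es j x" for j x t using rates that by auto
  show ?thesis
    by (unfold_locales; fact f_facts g_X fg' E_subspace F_iso \<Gamma>_iso \<Gamma>F' K finite_atLeastAtMost
        Es_subspace Es_subset F_Es unique N N_F lo_le_hi separated)
qed

theorem mainTheorem9:
  fixes X :: "'x::metric_space set"
    and E :: "'x \<Rightarrow> 'v::euclidean_space set"
    and f g :: "'x \<Rightarrow> 'x"
    and F \<Gamma> :: "'x \<Rightarrow> 'v \<Rightarrow> 'v"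
    and l :: nat and chi :: "nat \<Rightarrow> real" and \<epsilon> :: real
    and Es :: "nat \<Rightarrow> 'x \<Rightarrow> 'v set"
  assumes X_compact: "compact X"
    and E_bundle: "cont_subbundle X E"
    and f_homeo: "\<exists>f'. homeomorphism X X f f'"
    and F_ext: "lin_ext X E f F"
    and l_pos: "l \<ge> 1"
    and chi_incr: "\<forall>i j. 1 \<le> i \<and> i < j \<and> j \<le> l \<longrightarrow> chi i < chi j"
    and chi_neg: "chi l < 0"
    and eps_pos: "0 < \<epsilon>" and eps_small: "\<epsilon> < eps0 l chi"
    and splitting: "invariant_splitting X E f F l Es"
    and metric: "\<exists>ip. cont_inner_family X E ip \<and>
       (\<forall>i\<in>{1..l}. \<forall>x\<in>X. \<forall>t\<in>Es i x.
          exp (chi i - \<epsilon>) * sqrt (ip x t t) \<le> sqrt (ip (f x) (F x t) (F x t)) \<and>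
          sqrt (ip (f x) (F x t) (F x t)) \<le> exp (chi i + \<epsilon>) * sqrt (ip x t t))"
    and g_homeo: "\<exists>g'. homeomorphism X X g g'"
    and fg_comm: "\<forall>x\<in>X. f (g x) = g (f x)"
    and \<Gamma>_ext: "lin_ext X E g \<Gamma>"
    and \<Gamma>F_comm: "\<forall>x\<in>X. \<forall>v\<in>E x. \<Gamma> (f x) (F x v) = F (g x) (\<Gamma> x v)"
  shows "\<forall>x\<in>X. \<forall>i\<in>{1..l}. \<Gamma> x ` Es i x = Es i (g x)"
proof -
  obtain f' where f': "homeomorphism X X f f'" using f_homeo by blast
  obtain ip where ip: "cont_inner_family X E ip" and rates: "\<forall>i\<in>{1..l}. \<forall>x\<in>X. \<forall>t\<in>Es i x.
          exp (chi i - \<epsilon>) * sqrt (ip x t t) \<le> sqrt (ip (f x) (F x t) (F x t)) \<and>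
          sqrt (ip (f x) (F x t) (F x t)) \<le> exp (chi i + \<epsilon>) * sqrt (ip x t t)"
    using metric by blast
  obtain C\<^sub>1 C\<^sub>2 where N: "0 < C\<^sub>1" "0 < C\<^sub>2"
      "\<And>x v. x \<in> X \<Longrightarrow> v \<in> E x \<Longrightarrow> norm v \<le> C\<^sub>1 * sqrt (ip x v v)"
      "\<And>x v. x \<in> X \<Longrightarrow> v \<in> E x \<Longrightarrow> sqrt (ip x v v) \<le> C\<^sub>2 * norm v"
    using inner_family_norm_equiv[OF X_compact E_bundle ip] by blast
  obtain K where K: "0 \<le> K" "\<And>x v. x \<in> X \<Longrightarrow> v \<in> E x \<Longrightarrow> norm (\<Gamma> x v) \<le> K * norm v"
    using lin_ext_bounded[OF X_compact E_bundle \<Gamma>_ext] by blast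
  have lo_le_hi: "chi i - \<epsilon> \<le> chi i + \<epsilon>" for i using eps_pos by simp
  have separated: "chi i + \<epsilon> < chi j - \<epsilon> \<or> chi j + \<epsilon> < chi i - \<epsilon>"
    if "i \<in> {1..l}" "j \<in> {1..l}" "i \<noteq> j" for i j
    using that eps0_separates_exponents[OF chi_incr chi_neg eps_small] by (cases "i < j") auto
  interpret commuting_linear_extensions X E f f' g F \<Gamma> "{1..l}" Es "\<lambda>i. chi i - \<epsilon>" "\<lambda>i. chi i + \<epsilon>"
      "\<lambda>x v. sqrt (ip x v v)" C\<^sub>1 C\<^sub>2 K
    by (rule commuting_linear_extensionsI[OF f' g_homeo fg_comm E_bundle F_ext \<Gamma>_ext
        \<Gamma>F_comm K splitting N rates lo_le_hi separated])
  show ?thesis using \<Gamma>_image_Es by blast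
qed

end
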